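(* The algebra $(\mathcal{T}_\bullet,\overline{\ast})$ is a free associative algebra, freely generated by the set of non-empty reduced set compositions in $\mathsf{Comp}=\bigcup_{n\ge0}\mathsf{Comp}_n$.
   Context: $[n]=\{1,\ldots,n\}$. A set composition of $[n]$ is a tuple $(P_1,\ldots,P_k)$ of pairwise disjoint non-empty subsets with union $[n]$; $\mathsf{Comp}_n$ is the set of them ($\mathsf{Comp}_0$ consists of the empty tuple). $\mathcal{T}_n$ is the free $\mathbb{Z}$-module on $\mathsf{Comp}_n$ and $\mathcal{T}_\bullet=\bigoplus_{n\ge0}\mathcal{T}_n$. The restricted product is defined bilinearly by $(P_1,\ldots,P_k)\,\overline{\ast}\,(Q_1,\ldots,Q_l)=(P_1,\ldots,P_k,p+Q_1,\ldots,p+Q_l)$ for $(P_1,\ldots,P_k)\in\mathsf{Comp}_p$, $(Q_1,\ldots,Q_l)\in\mathsf{Comp}_q$, where $p+X=\{p+x:x\in X\}$; its unit is the empty tuple. A set composition $(P_1,\ldots,P_k)\in\mathsf{Comp}_n$ is reduced if there is no pair $(a,m)$ with $1\le a<k$ and $m<n$ such that $P_1\cup\cdots\cup P_a=[m]$. *)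

theory Defs
  imports Main "HOL-Library.Poly_Mapping"
begin

definition is_comp_of :: "nat \<Rightarrow> nat set list \<Rightarrow> bool" where
  "is_comp_of n Ps \<longleftrightarrow>
     (\<forall>i<length Ps. Ps ! i \<noteq> {}) \<and>
     (\<forall>i<length Ps. \<forall>j<length Ps. i \<noteq> j \<longrightarrow> Ps ! i \<inter> Ps ! j = {}) \<and>
     \<Union> (set Ps) = {1..n}"

definition Comp :: "nat \<Rightarrow> nat set list set" where
  "Comp n = {Ps. is_comp_of n Ps}"

definition AllComp :: "nat set list set" where
  "AllComp = (\<Union>n. Comp n)"

text \<open>The n with Ps in Comp n (the number of elements of the underlying set).\<close>
definition comp_size :: "nat set list \<Rightarrow> nat" where
  "comp_size Ps = card (\<Union> (set Ps))"

definition shift_set :: "nat \<Rightarrow> nat set \<Rightarrow> nat set" where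
  "shift_set p X = (\<lambda>x. p + x) ` X"

definition rcomp :: "nat set list \<Rightarrow> nat set list \<Rightarrow> nat set list" where
  "rcomp Ps Qs = Ps @ map (shift_set (comp_size Ps)) Qs"

text \<open>T_bullet: the free Z-module on all set compositions, i.e. finitely supported
  integer-valued functions supported on compositions.\<close>
definition TT :: "(nat set list \<Rightarrow>\<^sub>0 int) set" where
  "TT = {a. Poly_Mapping.keys a \<subseteq> AllComp}"

definition rprod :: "(nat set list \<Rightarrow>\<^sub>0 int) \<Rightarrow> (nat set list \<Rightarrow>\<^sub>0 int) \<Rightarrow> (nat set list \<Rightarrow>\<^sub>0 int)" where
  "rprod a b = (\<Sum>p\<in>Poly_Mapping.keys a. \<Sum>q\<in>Poly_Mapping.keys b.
       Poly_Mapping.single (rcomp p q) (Poly_Mapping.lookup a p * Poly_Mapping.lookup b q))"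

definition runit :: "nat set list \<Rightarrow>\<^sub>0 int" where
  "runit = Poly_Mapping.single [] 1"

definition reduced :: "nat set list \<Rightarrow> bool" where
  "reduced Ps \<longleftrightarrow> \<not> (\<exists>a m. 1 \<le> a \<and> a < length Ps \<and> m < comp_size Ps \<and>
        \<Union> (set (take a Ps)) = {1..m})"

definition Generators :: "nat set list set" where
  "Generators = {Ps \<in> AllComp. Ps \<noteq> [] \<and> reduced Ps}"

text \<open>Unital ring homomorphisms (= Z-algebra homomorphisms) from (T, rprod) into a ring.\<close>
definition is_alg_hom :: "((nat set list \<Rightarrow>\<^sub>0 int) \<Rightarrow> 'a::ring_1) \<Rightarrow> bool" where
  "is_alg_hom \<phi> \<longleftrightarrow>
     (\<forall>a\<in>TT. \<forall>b\<in>TT. \<phi> (a + b) = \<phi> a + \<phi> b \<and> \<phi> (rprod a b) = \<phi> a * \<phi> b) \<and>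
     \<phi> runit = 1"

definition freely_generated_by :: "nat set list set \<Rightarrow> ('a::ring_1) itself \<Rightarrow> bool" where
  "freely_generated_by X _ \<longleftrightarrow>
     (\<forall>f :: nat set list \<Rightarrow> 'a.
        \<exists>\<phi>. is_alg_hom \<phi> \<and> (\<forall>x\<in>X. \<phi> (Poly_Mapping.single x 1) = f x) \<and>
           (\<forall>\<psi>. is_alg_hom \<psi> \<and> (\<forall>x\<in>X. \<psi> (Poly_Mapping.single x 1) = f x)
                 \<longrightarrow> (\<forall>a\<in>TT. \<psi> a = \<phi> a)))"

end

theory Submission
  imports Defs
begin

text \<open>Every set composition factors uniquely, under the restricted product, into non-empty
  reduced ones: the first factor is the shortest non-empty prefix whose blocks cover an initial
  segment \<open>{1..m}\<close>, and the remaining blocks, shifted down by \<open>m\<close>, again form a set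
  composition. Hence the set compositions form the free monoid on the reduced ones, and
  \<open>(T, rprod)\<close> is its monoid ring over \<open>\<int>\<close>. A map \<open>f\<close> on the generators therefore extends
  to the ring homomorphism sending a composition to the product of \<open>f\<close> over its factors, and
  any homomorphism agreeing with \<open>f\<close> on the generators agrees with it on every composition
  by induction along the factorisation.\<close>

section \<open>Set compositions under the restricted product\<close>

lemma Comp_iff:
  "Ps \<in> Comp n \<longleftrightarrow> {} \<notin> set Ps \<and> sorted_wrt disjnt Ps \<and> \<Union>(set Ps) = {1..n}"
proof -
  have "(\<forall>i<length Ps. \<forall>j<length Ps. i \<noteq> j \<longrightarrow> Ps ! i \<inter> Ps ! j = {}) \<longleftrightarrow> sorted_wrt disjnt Ps"
    (is "?pairwise \<longleftrightarrow> _")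
  proof
    assume ?pairwise
    then show "sorted_wrt disjnt Ps"
      by (simp add: sorted_wrt_iff_nth_less disjnt_def)
  next
    assume "sorted_wrt disjnt Ps"
    then have "Ps ! i \<inter> Ps ! j = {}" if "i < length Ps" "j < length Ps" "i \<noteq> j" for i j
      using that by (cases i j rule: linorder_cases)
        (auto simp: sorted_wrt_iff_nth_less disjnt_def inf_commute)
    then show ?pairwise
      by blast
  qed
  moreover have "(\<forall>i<length Ps. Ps ! i \<noteq> {}) \<longleftrightarrow> {} \<notin> set Ps"
    by (auto simp: in_set_conv_nth)
  ultimately show ?thesis
    by (simp add: Comp_def is_comp_of_def)
qed

lemma comp_size_Comp: "Ps \<in> Comp n \<Longrightarrow> comp_size Ps = n"
  by (simp add: Comp_iff comp_size_def)

lemma AllComp_iff: "Ps \<in> AllComp \<longleftrightarrow> Ps \<in> Comp (comp_size Ps)"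
  by (auto simp: AllComp_def comp_size_Comp)

lemma shift_set_shift_set: "shift_set m (shift_set n X) = shift_set (m + n) X"
  by (simp add: shift_set_def image_image add.assoc)

lemma disjnt_shift_set_iff: "disjnt (shift_set m X) (shift_set m Y) \<longleftrightarrow> disjnt X Y"
  by (auto simp: shift_set_def disjnt_def)

lemma shift_set_atLeastAtMost: "shift_set m {a..b} = {m + a..m + b}"
  by (simp add: shift_set_def add.commute)

lemma Union_map_shift_set: "\<Union>(set (map (shift_set m) Xs)) = shift_set m (\<Union>(set Xs))"
  by (auto simp: shift_set_def)

lemma rcomp_Comp:
  assumes p: "p \<in> Comp n" and q: "q \<in> Comp k"
  shows "rcomp p q \<in> Comp (n + k)"
proof -
  let ?q' = "map (shift_set n) q"
  have "\<Union>(set q) = {1..k}"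
    using q by (simp add: Comp_iff)
  then have Union_q': "\<Union>(set ?q') = {n + 1..n + k}"
    by (simp only: Union_map_shift_set shift_set_atLeastAtMost)
  have Union_p: "\<Union>(set p) = {1..n}"
    using p by (simp add: Comp_iff)
  have "disjnt {1..n} {n + 1..n + k}"
    by (simp add: disjnt_def)
  then have "\<forall>X\<in>set p. \<forall>Y\<in>set ?q'. disjnt X Y"
    using Union_p Union_q' by (metis Union_upper disjnt_subset1 disjnt_subset2)
  moreover have "sorted_wrt disjnt ?q'"
    using q by (simp add: Comp_iff sorted_wrt_map disjnt_shift_set_iff)
  ultimately have "sorted_wrt disjnt (p @ ?q')"
    using p by (simp add: Comp_iff sorted_wrt_append)
  moreover have "{} \<notin> set (p @ ?q')"
    using p q by (auto simp: Comp_iff shift_set_def)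
  moreover have "{1..n} \<union> {n + 1..n + k} = {1..n + k}"
    by auto
  then have "\<Union>(set (p @ ?q')) = {1..n + k}"
    using Union_p Union_q' by simp
  ultimately show ?thesis
    by (simp add: Comp_iff rcomp_def comp_size_Comp[OF p])
qed

lemma rcomp_AllComp:
  assumes "p \<in> AllComp" and "q \<in> AllComp"
  shows "rcomp p q \<in> Comp (comp_size p + comp_size q)"
  using assms unfolding AllComp_iff by (rule rcomp_Comp)

lemma AllComp_rcomp:
  assumes "p \<in> AllComp" and "q \<in> AllComp"
  shows "rcomp p q \<in> AllComp"
  using rcomp_AllComp[OF assms] unfolding AllComp_def by blast

lemma comp_size_rcomp:
  "p \<in> AllComp \<Longrightarrow> q \<in> AllComp \<Longrightarrow> comp_size (rcomp p q) = comp_size p + comp_size q"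
  by (rule comp_size_Comp) (rule rcomp_AllComp)

lemma rcomp_assoc:
  assumes "p \<in> AllComp" and "q \<in> AllComp"
  shows "rcomp (rcomp p q) r = rcomp p (rcomp q r)"
  using comp_size_rcomp[OF assms] by (simp add: rcomp_def shift_set_shift_set)

lemma shift_set_0 [simp]: "shift_set 0 = id"
  by (simp add: shift_set_def fun_eq_iff)

lemma rcomp_Nil_left [simp]: "rcomp [] q = q"
  by (simp add: rcomp_def comp_size_def)

lemma rcomp_Nil_right [simp]: "rcomp p [] = p"
  by (simp add: rcomp_def)

lemma shift_set_eq_iff: "shift_set m X = shift_set m Y \<longleftrightarrow> X = Y"
  by (simp add: shift_set_def inj_image_eq_iff)

definition unshift_set :: "nat \<Rightarrow> nat set \<Rightarrow> nat set" where
  "unshift_set m X = (\<lambda>x. x - m) ` X"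

lemma unshift_shift_set [simp]: "unshift_set m (shift_set m X) = X"
  by (simp add: unshift_set_def shift_set_def image_image)

lemma shift_unshift_set:
  assumes "X \<subseteq> {m<..}"
  shows "shift_set m (unshift_set m X) = X"
proof -
  have "(\<lambda>x. m + (x - m)) ` X = id ` X"
    using assms by (intro image_cong) auto
  then show ?thesis
    by (simp add: shift_set_def unshift_set_def image_image)
qed

lemma Union_drop_Comp:
  assumes p: "p \<in> Comp n" and prefix: "\<Union>(set (take a p)) = {1..m}"
  shows "m \<le> n" and "\<Union>(set (drop a p)) = {m<..n}"
proof -
  have "sorted_wrt disjnt (take a p @ drop a p)" and Union_p: "\<Union>(set p) = {1..n}"
    using p by (simp_all add: Comp_iff)
  then have "disjnt (\<Union>(set (take a p))) (\<Union>(set (drop a p)))"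
    unfolding sorted_wrt_append by (simp add: disjnt_Union1 disjnt_Union2)
  moreover have "\<Union>(set (take a p)) \<union> \<Union>(set (drop a p)) = {1..n}"
    using Union_p by (metis Union_Un_distrib append_take_drop_id set_append)
  ultimately have "\<Union>(set (drop a p)) = {1..n} - {1..m}" and "{1..m} \<subseteq> {1..n}"
    using prefix by (auto simp: disjnt_def)
  moreover show "m \<le> n"
    using \<open>{1..m} \<subseteq> {1..n}\<close> by (cases "m = 0") auto
  ultimately show "\<Union>(set (drop a p)) = {m<..n}"
    by auto
qed

lemma Comp_split:
  assumes p: "p \<in> Comp n" and prefix: "\<Union>(set (take a p)) = {1..m}"
  defines "q \<equiv> map (unshift_set m) (drop a p)"
  shows "take a p \<in> Comp m" and "q \<in> Comp (n - m)" and "rcomp (take a p) q = p"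
proof -
  let ?g = "take a p" and ?r = "drop a p"
  have "{} \<notin> set p" and "sorted_wrt disjnt (?g @ ?r)"
    using p by (simp_all add: Comp_iff)
  then show g: "?g \<in> Comp m"
    using prefix by (auto simp: Comp_iff sorted_wrt_append dest: in_set_takeD)
  have shift_q: "map (shift_set m) q = ?r"
    unfolding q_def map_map
  proof (rule map_idI)
    fix X assume "X \<in> set ?r"
    then have "X \<subseteq> {m<..}"
      using Union_drop_Comp(2)[OF p prefix] by fastforce
    then show "(shift_set m \<circ> unshift_set m) X = X"
      by (simp add: shift_unshift_set)
  qed
  show "rcomp ?g q = p"
    by (simp add: rcomp_def comp_size_Comp[OF g] shift_q)
  have "shift_set m (\<Union>(set q)) = \<Union>(set ?r)"
    by (simp only: Union_map_shift_set flip: shift_q)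
  also have "\<dots> = shift_set m {1..n - m}"
    using Union_drop_Comp[OF p prefix] by (auto simp: shift_set_atLeastAtMost)
  finally have "\<Union>(set q) = {1..n - m}"
    by (simp add: shift_set_eq_iff)
  moreover have "{} \<notin> set q"
  proof
    assume "{} \<in> set q"
    then have "shift_set m {} \<in> set ?r"
      unfolding shift_q[symmetric] by simp
    then show False
      using \<open>{} \<notin> set p\<close> by (simp add: shift_set_def) (meson in_set_dropD)
  qed
  moreover have "sorted_wrt disjnt q"
    using \<open>sorted_wrt disjnt (?g @ ?r)\<close>
    by (simp flip: shift_q add: sorted_wrt_append sorted_wrt_map disjnt_shift_set_iff)
  ultimately show "q \<in> Comp (n - m)"
    by (simp add: Comp_iff)
qed

section \<open>Unique factorisation into reduced compositions\<close>

definition interval_prefix :: "nat set list \<Rightarrow> nat \<Rightarrow> bool" where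
  "interval_prefix p a \<longleftrightarrow> (\<exists>m. \<Union>(set (take a p)) = {1..m})"

lemma Comp_prefix_size_less:
  assumes g: "g \<in> Comp m" and "b < length g" and prefix: "\<Union>(set (take b g)) = {1..k}"
  shows "k < m"
proof -
  have blocks: "{} \<notin> set g" "sorted_wrt disjnt (take b g @ drop b g)" "\<Union>(set g) = {1..m}"
    using g by (simp_all add: Comp_iff)
  have "g ! b \<in> set (drop b g)"
    using \<open>b < length g\<close> by (simp add: Cons_nth_drop_Suc[symmetric])
  moreover have "g ! b \<noteq> {}"
    using blocks(1) \<open>b < length g\<close> nth_mem by fastforce
  ultimately obtain x where x: "x \<in> g ! b" "g ! b \<in> set (drop b g)"
    by blast
  then have "x \<notin> \<Union>(set (take b g))"
    using blocks(2) unfolding sorted_wrt_append disjnt_def by blast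
  moreover have "x \<in> {1..m}"
    using x blocks(3) by (metis UnionI in_set_dropD)
  ultimately show ?thesis
    using prefix by auto
qed

lemma reduced_Comp_iff:
  assumes "g \<in> Comp m"
  shows "reduced g \<longleftrightarrow> (\<forall>b. 0 < b \<longrightarrow> b < length g \<longrightarrow> \<not> interval_prefix g b)"
proof -
  have "interval_prefix g b \<longleftrightarrow> (\<exists>k < comp_size g. \<Union>(set (take b g)) = {1..k})"
    if "b < length g" for b
    using Comp_prefix_size_less[OF assms that] comp_size_Comp[OF assms]
    by (auto simp: interval_prefix_def)
  then show ?thesis
    unfolding reduced_def by (auto simp: Suc_le_eq)
qed

text \<open>For compositions the disjunct \<open>length p \<le> a\<close> is redundant; it only makes the
  minimum exist for arbitrary lists, so that \<open>factors\<close> below terminates.\<close>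

definition first_factor_length :: "nat set list \<Rightarrow> nat" where
  "first_factor_length p = (LEAST a. 0 < a \<and> (length p \<le> a \<or> interval_prefix p a))"

lemma first_factor_length_pos: "0 < first_factor_length p"
  unfolding first_factor_length_def by (rule LeastI2[of _ "Suc (length p)"]) auto

lemma first_factor_length_Comp:
  assumes p: "p \<in> Comp n" and "p \<noteq> []"
  shows "first_factor_length p \<le> length p"
    and "interval_prefix p (first_factor_length p)"
    and "\<And>b. 0 < b \<Longrightarrow> b < first_factor_length p \<Longrightarrow> \<not> interval_prefix p b"
proof -
  let ?P = "\<lambda>a. 0 < a \<and> (length p \<le> a \<or> interval_prefix p a)"
  have whole: "interval_prefix p (length p)"
    using p by (auto simp: interval_prefix_def Comp_iff)
  then have "?P (length p)"
    using \<open>p \<noteq> []\<close> by simp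
  then show le: "first_factor_length p \<le> length p"
    unfolding first_factor_length_def by (rule Least_le)
  from \<open>?P (length p)\<close> have "?P (first_factor_length p)"
    unfolding first_factor_length_def by (rule LeastI)
  with le show "interval_prefix p (first_factor_length p)"
    using whole by (metis le_antisym)
  show "\<not> interval_prefix p b" if "0 < b" "b < first_factor_length p" for b
    using that not_less_Least[of b ?P] by (auto simp: first_factor_length_def)
qed

lemma first_factor_length_rcomp:
  assumes g: "g \<in> Generators"
  shows "first_factor_length (rcomp g q) = length g"
  unfolding first_factor_length_def
proof (rule Least_equality)
  have gC: "g \<in> Comp (comp_size g)" and "g \<noteq> []" and red: "reduced g"
    using g by (simp_all add: Generators_def AllComp_iff)
  show "0 < length g \<and> (length (rcomp g q) \<le> length g \<or> interval_prefix (rcomp g q) (length g))"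
    using gC \<open>g \<noteq> []\<close> by (auto simp: rcomp_def interval_prefix_def Comp_iff)
  fix b
  assume b: "0 < b \<and> (length (rcomp g q) \<le> b \<or> interval_prefix (rcomp g q) b)"
  show "length g \<le> b"
  proof (rule ccontr)
    assume "\<not> length g \<le> b"
    then have "b < length g" and "interval_prefix g b"
      using b by (auto simp: rcomp_def interval_prefix_def)
    then show False
      using b red reduced_Comp_iff[OF gC] by blast
  qed
qed

function factors :: "nat set list \<Rightarrow> nat set list list" where
  "factors p =
    (if p = [] then []
     else take (first_factor_length p) p #
       factors (map (unshift_set (comp_size (take (first_factor_length p) p)))
         (drop (first_factor_length p) p)))"
  by auto
termination
  by (relation "measure length") (simp_all add: first_factor_length_pos)

declare factors.simps [simp del]

lemma factors_Nil [simp]: "factors [] = []"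
  by (simp add: factors.simps)

lemma factors_rcomp_Generators:
  assumes "g \<in> Generators"
  shows "factors (rcomp g q) = g # factors q"
proof -
  have "rcomp g q \<noteq> []"
    using assms by (simp add: Generators_def rcomp_def)
  moreover have "take (length g) (rcomp g q) = g"
    and "drop (length g) (rcomp g q) = map (shift_set (comp_size g)) q"
    by (simp_all add: rcomp_def)
  ultimately show ?thesis
    by (subst factors.simps) (simp add: first_factor_length_rcomp[OF assms] map_idI)
qed

lemma AllComp_decompose:
  assumes p: "p \<in> AllComp" and "p \<noteq> []"
  obtains g q where "g \<in> Generators" and "q \<in> AllComp" and "p = rcomp g q"
    and "length q < length p"
proof -
  let ?a = "first_factor_length p"
  have pC: "p \<in> Comp (comp_size p)"
    using p by (simp add: AllComp_iff)
  note first = first_factor_length_Comp[OF pC \<open>p \<noteq> []\<close>]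
  obtain m where prefix: "\<Union>(set (take ?a p)) = {1..m}"
    using first(2) by (auto simp: interval_prefix_def)
  let ?q = "map (unshift_set m) (drop ?a p)"
  note split = Comp_split[OF pC prefix]
  have "take ?a p \<noteq> []"
    using \<open>p \<noteq> []\<close> first_factor_length_pos[of p] by simp
  moreover have "reduced (take ?a p)"
    using first(1,3) unfolding reduced_Comp_iff[OF split(1)]
    by (simp add: interval_prefix_def min_absorb1)
  ultimately have "take ?a p \<in> Generators"
    using split(1) by (auto simp: Generators_def AllComp_def)
  moreover have "?q \<in> AllComp"
    using split(2) by (auto simp: AllComp_def)
  moreover have "length ?q < length p"
    using \<open>p \<noteq> []\<close> first_factor_length_pos[of p] by simp
  ultimately show thesis
    using split(3) that by metis
qed

lemma AllComp_induct [consumes 1, case_names Nil rcomp]: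
  assumes "p \<in> AllComp"
    and Nil: "P []"
    and rcomp: "\<And>g q. g \<in> Generators \<Longrightarrow> q \<in> AllComp \<Longrightarrow> P q \<Longrightarrow> P (rcomp g q)"
  shows "P p"
  using assms(1)
proof (induction "length p" arbitrary: p rule: less_induct)
  case less
  show ?case
  proof (cases "p = []")
    case True
    then show ?thesis
      using Nil by simp
  next
    case False
    with less.prems obtain g q where "g \<in> Generators" "q \<in> AllComp" "p = rcomp g q"
      and "length q < length p"
      by (rule AllComp_decompose)
    then show ?thesis
      using less.hyps rcomp by blast
  qed
qed

lemma factors_rcomp:
  assumes "p \<in> AllComp"
  shows "factors (rcomp p q) = factors p @ factors q"
  using assms
proof (induction p rule: AllComp_induct)
  case Nil
  then show ?case
    by simp
next
  case (rcomp g p)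
  then have "g \<in> AllComp"
    by (simp add: Generators_def)
  then have "rcomp (rcomp g p) q = rcomp g (rcomp p q)"
    using rcomp_assoc rcomp.hyps by blast
  then show ?case
    using rcomp by (simp add: factors_rcomp_Generators)
qed

section \<open>The algebra and its universal property\<close>

lemma frag_cmul_single: "frag_cmul c (Poly_Mapping.single x d) = Poly_Mapping.single x (c * d)"
  by (rule poly_mapping_eqI) (simp add: lookup_single when_def)

lemma rprod_eq_frag_extend:
  "rprod a b = frag_extend (\<lambda>p. frag_extend (\<lambda>q. frag_of (rcomp p q)) b) a"
  by (simp add: rprod_def frag_extend_def frag_cmul_sum frag_cmul_single)

lemma rprod_eq_frag_extend_right:
  "rprod a b = frag_extend (\<lambda>q. frag_extend (\<lambda>p. frag_of (rcomp p q)) a) b"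
  unfolding rprod_def frag_extend_def
  by (subst sum.swap) (simp add: frag_cmul_sum frag_cmul_single mult.commute)

lemma rprod_diff_left: "rprod (a - a') b = rprod a b - rprod a' b"
  by (simp add: rprod_eq_frag_extend frag_extend_diff)

lemma rprod_diff_right: "rprod a (b - b') = rprod a b - rprod a b'"
  by (simp add: rprod_eq_frag_extend_right frag_extend_diff)

lemma rprod_0_left [simp]: "rprod 0 b = 0"
  by (simp add: rprod_def)

lemma rprod_0_right [simp]: "rprod a 0 = 0"
  by (simp add: rprod_def)

lemma rprod_frag_of [simp]: "rprod (frag_of p) (frag_of q) = frag_of (rcomp p q)"
  by (simp add: rprod_eq_frag_extend)

lemma runit_rprod: "rprod runit a = a"
  by (simp add: rprod_eq_frag_extend runit_def frag_expansion[symmetric])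

lemma rprod_runit: "rprod a runit = a"
  by (simp add: rprod_eq_frag_extend runit_def frag_expansion[symmetric])

lemma rprod_TT:
  assumes a: "a \<in> TT" and b: "b \<in> TT"
  shows "rprod a b \<in> TT"
proof -
  have "Poly_Mapping.keys (rprod a b)
      \<subseteq> (\<Union>p\<in>Poly_Mapping.keys a. \<Union>q\<in>Poly_Mapping.keys b. {rcomp p q})"
    unfolding rprod_eq_frag_extend
    by (rule order_trans[OF keys_frag_extend], rule UN_mono[OF order_refl])
      (rule order_trans[OF keys_frag_extend], simp)
  also have "\<dots> \<subseteq> AllComp"
    using a b by (auto simp: TT_def intro: AllComp_rcomp)
  finally show ?thesis
    by (simp add: TT_def)
qed

lemma rprod_assoc:
  assumes "a \<in> TT" and "b \<in> TT" and "c \<in> TT"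
  shows "rprod (rprod a b) c = rprod a (rprod b c)"
  using assms(1) unfolding TT_def mem_Collect_eq
proof (induction a rule: frag_induction)
  case (one x)
  show ?case
    using assms(2) unfolding TT_def mem_Collect_eq
  proof (induction b rule: frag_induction)
    case (one y)
    show ?case
      using assms(3) unfolding TT_def mem_Collect_eq
    proof (induction c rule: frag_induction)
      case (one z)
      show ?case
        using \<open>x \<in> AllComp\<close> \<open>y \<in> AllComp\<close> by (simp add: rcomp_assoc)
    qed (simp_all add: rprod_diff_right)
  qed (simp_all add: rprod_diff_left rprod_diff_right)
qed (simp_all add: rprod_diff_left)

definition lin_ext :: "('b \<Rightarrow> 'a::ring_1) \<Rightarrow> ('b \<Rightarrow>\<^sub>0 int) \<Rightarrow> 'a" where
  "lin_ext F a = (\<Sum>p\<in>Poly_Mapping.keys a. of_int (Poly_Mapping.lookup a p) * F p)"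

lemma lin_ext_add: "lin_ext F (a + b) = lin_ext F a + lin_ext F b"
  unfolding lin_ext_def by (rule setsum_keys_plus_distrib) (auto simp: distrib_right)

lemma lin_ext_zero [simp]: "lin_ext F 0 = 0"
  by (simp add: lin_ext_def)

lemma lin_ext_diff: "lin_ext F (a - b) = lin_ext F a - lin_ext F b"
  using lin_ext_add[of F "a - b" b] by (simp add: eq_diff_eq)

lemma lin_ext_frag_of [simp]: "lin_ext F (frag_of p) = F p"
  by (simp add: lin_ext_def)

lemma lin_ext_cong:
  "Poly_Mapping.keys a \<subseteq> S \<Longrightarrow> (\<And>p. p \<in> S \<Longrightarrow> F p = G p) \<Longrightarrow> lin_ext F a = lin_ext G a"
  unfolding lin_ext_def by (auto intro!: sum.cong)

lemma additive_eq_lin_ext: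
  fixes \<psi> :: "('b \<Rightarrow>\<^sub>0 int) \<Rightarrow> 'a::ring_1"
  assumes add: "\<And>a b. Poly_Mapping.keys a \<subseteq> S \<Longrightarrow> Poly_Mapping.keys b \<subseteq> S \<Longrightarrow>
      \<psi> (a + b) = \<psi> a + \<psi> b"
    and "Poly_Mapping.keys a \<subseteq> S"
  shows "\<psi> a = lin_ext (\<lambda>p. \<psi> (frag_of p)) a"
proof -
  have "Poly_Mapping.keys a \<subseteq> S \<and> \<psi> a = lin_ext (\<lambda>p. \<psi> (frag_of p)) a"
    using assms(2)
  proof (induction a rule: frag_induction)
    case zero
    show ?case
      using add[of 0 0] by simp
  next
    case (one x)
    then show ?case
      by (simp add: keys_frag_of)
  next
    case (diff a b)
    then have "Poly_Mapping.keys (a - b) \<subseteq> S"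
      using keys_diff[of a b] by blast
    then have "\<psi> (a - b) = \<psi> a - \<psi> b"
      using add[of "a - b" b] diff by (simp add: eq_diff_eq)
    with diff \<open>Poly_Mapping.keys (a - b) \<subseteq> S\<close> show ?case
      by (simp add: lin_ext_diff)
  qed
  then show ?thesis
    by blast
qed

lemma lin_ext_rprod:
  assumes mult: "\<And>p q. p \<in> AllComp \<Longrightarrow> q \<in> AllComp \<Longrightarrow> F (rcomp p q) = F p * F q"
    and "a \<in> TT" and "b \<in> TT"
  shows "lin_ext F (rprod a b) = lin_ext F a * lin_ext F b"
  using assms(2) unfolding TT_def mem_Collect_eq
proof (induction a rule: frag_induction)
  case (one x)
  show ?case
    using assms(3) unfolding TT_def mem_Collect_eq
  proof (induction b rule: frag_induction)
    case (one y)
    then show ?case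
      using \<open>x \<in> AllComp\<close> by (simp add: mult)
  qed (simp_all add: rprod_diff_right lin_ext_diff right_diff_distrib)
qed (simp_all add: rprod_diff_left lin_ext_diff left_diff_distrib)

definition free_extension :: "(nat set list \<Rightarrow> 'a::ring_1) \<Rightarrow> (nat set list \<Rightarrow>\<^sub>0 int) \<Rightarrow> 'a" where
  "free_extension f = lin_ext (\<lambda>p. prod_list (map f (factors p)))"

lemma is_alg_hom_free_extension: "is_alg_hom (free_extension f)"
  unfolding is_alg_hom_def free_extension_def
  by (simp add: lin_ext_add lin_ext_rprod factors_rcomp runit_def)

lemma free_extension_Generators: "x \<in> Generators \<Longrightarrow> free_extension f (frag_of x) = f x"
  using factors_rcomp_Generators[of x "[]"] by (simp add: free_extension_def)

lemma alg_hom_eq_free_extension: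
  assumes hom: "is_alg_hom \<psi>" and gen: "\<forall>x\<in>Generators. \<psi> (frag_of x) = f x" and "a \<in> TT"
  shows "\<psi> a = free_extension f a"
proof -
  have "\<psi> (frag_of p) = prod_list (map f (factors p))" if "p \<in> AllComp" for p
    using that
  proof (induction p rule: AllComp_induct)
    case Nil
    then show ?case
      using hom by (simp add: is_alg_hom_def runit_def)
  next
    case (rcomp g q)
    then have "frag_of g \<in> TT" and "frag_of q \<in> TT"
      by (simp_all add: TT_def keys_frag_of Generators_def)
    then have "\<psi> (frag_of (rcomp g q)) = \<psi> (frag_of g) * \<psi> (frag_of q)"
      using hom rprod_frag_of unfolding is_alg_hom_def by metis
    then show ?case
      using rcomp gen by (simp add: factors_rcomp_Generators)
  qed
  moreover have "\<psi> a = lin_ext (\<lambda>p. \<psi> (frag_of p)) a"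
    by (rule additive_eq_lin_ext[where S = AllComp])
      (use hom \<open>a \<in> TT\<close> in \<open>auto simp: is_alg_hom_def TT_def\<close>)
  ultimately show ?thesis
    using \<open>a \<in> TT\<close> unfolding free_extension_def TT_def by (auto intro: lin_ext_cong)
qed

theorem proposition3p1:
  "(\<forall>a\<in>TT. \<forall>b\<in>TT. \<forall>c\<in>TT. rprod (rprod a b) c = rprod a (rprod b c)) \<and>
   (\<forall>a\<in>TT. rprod runit a = a \<and> rprod a runit = a) \<and>
   (\<forall>a\<in>TT. \<forall>b\<in>TT. rprod a b \<in> TT) \<and>
   freely_generated_by Generators TYPE('a::ring_1)"
proof (intro conjI ballI)
  show "freely_generated_by Generators TYPE('a)"
    unfolding freely_generated_by_def
  proof
    fix f :: "nat set list \<Rightarrow> 'a"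
    show "\<exists>\<phi>. is_alg_hom \<phi> \<and> (\<forall>x\<in>Generators. \<phi> (frag_of x) = f x) \<and>
        (\<forall>\<psi>. is_alg_hom \<psi> \<and> (\<forall>x\<in>Generators. \<psi> (frag_of x) = f x) \<longrightarrow>
          (\<forall>a\<in>TT. \<psi> a = \<phi> a))"
      by (intro exI[of _ "free_extension f"] conjI ballI allI impI is_alg_hom_free_extension
          free_extension_Generators) (auto intro: alg_hom_eq_free_extension)
  qed
qed (simp_all add: rprod_assoc runit_rprod rprod_runit rprod_TT)

end
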